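(* For a nonempty finite subset $E\subseteq\mathbb{N}$, the filter $\mathcal{F}_E$ is a maximal element of the poset $\mathfrak{F}\setminus\{\mathcal{F}_\infty\}$ if and only if there exists an odd prime $p\notin\Pi_E$ such that $A_E=\{2,p\}$.
   Context: $\mathbb{N}=\{1,2,\dots\}$, $\mathbb{N}_0=\{0\}\cup\mathbb{N}$, $\Pi$ the set of primes, $\Pi_z$ the set of prime divisors of $z$. The Kirch topology $\tau_K$ on $\mathbb{N}$ is generated by the base of all $a+b\mathbb{N}_0=\{a+bn:n\in\mathbb{N}_0\}$ with $a,b\in\mathbb{N}$ coprime and $b$ square-free. Closures $\overline{U}$ are in $\tau_K$; $\tau_x=\{U\in\tau_K:x\in U\}$. For finite $E\subseteq\mathbb{N}$, $\mathcal{F}_E=\{B\subseteq\mathbb{N}:\exists (U_x)_{x\in E}\in\prod_{x\in E}\tau_x\ (\bigcap_{x\in E}\overline{U_x}\subseteq B)\}$ (with $\mathcal{F}_\emptyset=\{\mathbb{N}\}$); $\mathcal{F}_\infty=\{B\subseteq\mathbb{N}:\exists n\in\mathbb{N}\ \exists U_1,\dots,U_n\in\tau_K\setminus\{\emptyset\}\ (\overline{U_1}\cap\dots\cap\overline{U_n}\subseteq B)\}$; and $\mathfrak{F}=\{\mathcal{F}_E:E\subseteq\mathbb{N}\text{ finite}\}\cup\{\mathcal{F}_\infty\}$, ordered by inclusion. For nonempty finite $E$: $\Pi_E=\bigcap_{z\in E}\Pi_z$ and $A_E=\{p\in\Pi:\exists k\in\mathbb{N}\ (E\subseteq p\mathbb{Z}\cup(k+p\mathbb{Z}))\}$.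 *)

theory Defs
  imports "HOL-Computational_Algebra.Computational_Algebra" "HOL-Number_Theory.Number_Theory"
begin

definition Npos :: "nat set" where "Npos = {n. n \<ge> 1}"

definition kirch_basic :: "nat set \<Rightarrow> bool" where
  "kirch_basic S \<longleftrightarrow> (\<exists>a b. a \<ge> 1 \<and> b \<ge> 1 \<and> coprime a b \<and> squarefree b \<and>
      S = {a + b * n | n. True})"

definition kirch_open :: "nat set \<Rightarrow> bool" where
  "kirch_open U \<longleftrightarrow> U \<subseteq> Npos \<and> (\<forall>x\<in>U. \<exists>S. kirch_basic S \<and> x \<in> S \<and> S \<subseteq> U)"

definition kirch_closure :: "nat set \<Rightarrow> nat set" where
  "kirch_closure A = {x \<in> Npos. \<forall>V. kirch_open V \<and> x \<in> V \<longrightarrow> V \<inter> A \<noteq> {}}"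

definition kirch_nbhds :: "nat \<Rightarrow> nat set set" where
  "kirch_nbhds x = {U. kirch_open U \<and> x \<in> U}"

text \<open>The filter F_E (for finite E); for E empty this is {Npos}.\<close>
definition filt :: "nat set \<Rightarrow> nat set set" where
  "filt E = {B. B \<subseteq> Npos \<and> (\<exists>U :: nat \<Rightarrow> nat set. (\<forall>x\<in>E. U x \<in> kirch_nbhds x) \<and>
       Npos \<inter> (\<Inter>x\<in>E. kirch_closure (U x)) \<subseteq> B)}"

definition filt_inf :: "nat set set" where
  "filt_inf = {B. B \<subseteq> Npos \<and> (\<exists>Us :: nat set list. Us \<noteq> [] \<and>
       (\<forall>U\<in>set Us. kirch_open U \<and> U \<noteq> {}) \<and> (\<Inter>U\<in>set Us. kirch_closure U) \<subseteq> B)}"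

definition filt_family :: "nat set set set" where
  "filt_family = {filt E | E. finite E \<and> E \<subseteq> Npos} \<union> {filt_inf}"

definition maximal_in :: "'a set set \<Rightarrow> 'a set \<Rightarrow> bool" where
  "maximal_in P F \<longleftrightarrow> F \<in> P \<and> (\<forall>G\<in>P. F \<subseteq> G \<longrightarrow> G = F)"

definition PiE_primes :: "nat set \<Rightarrow> nat set" where
  "PiE_primes E = (\<Inter>z\<in>E. prime_factors z)"

definition A_set :: "nat set \<Rightarrow> nat set" where
  "A_set E = {p. prime p \<and> (\<exists>k::nat. k \<ge> 1 \<and>
      (\<forall>z\<in>E. (int p) dvd (int z) \<or> [int z = int k] (mod int p)))}"

end

theory Submission
  imports Defs
begin

text \<open>
  The Kirch closure of a basic open set x + b N_0 consists of the y \<ge> 1 such that, for every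
  prime p dividing b, either p divides y or y \<equiv> x (mod p). Hence F_E is generated by the sets
  of y satisfying, at every prime p up to some bound, the condition "p divides y, or y is
  congruent mod p to all points of E prime to p", and F_E \<subseteq> F_E' iff at every prime the
  condition for E' implies the one for E. F_\<infinity> is generated in the same way by the
  condition "p divides y" at the odd primes, so F_E = F_\<infinity> iff A_E \<subseteq> {2}.

  If F_E is maximal, p is an odd prime in A_E and r is the residue of E mod p, then
  {r, r + p, r + 2p} has the residue r at p and no residue at any other odd prime. Its filter
  lies above F_E and hence equals it, which forces A_E = {2, p} and p \<notin> \<Pi>_E. Conversely,
  if A_E = {2, p} and p \<notin> \<Pi>_E, then every F_E' \<noteq> F_\<infinity> above F_E has a residue at p,
  which must be that of E, and so F_E' \<subseteq> F_E.
\<close>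

section \<open>Arithmetic progressions and Kirch closures\<close>

abbreviation progression :: "nat \<Rightarrow> nat \<Rightarrow> nat set" where
  "progression a b \<equiv> {a + b * n | n. True}"

lemma progression_shift:
  assumes "z \<in> progression a b"
  shows "progression z b \<subseteq> progression a b"
proof
  fix w assume "w \<in> progression z b"
  then obtain m where "w = z + b * m" by blast
  moreover obtain n where "z = a + b * n" using assms by blast
  ultimately have "w = a + b * (n + m)" by (simp add: algebra_simps)
  then show "w \<in> progression a b" by auto
qed

lemma coprime_progression:
  assumes "coprime a b" "z \<in> progression a b"
  shows "coprime z b"
proof -
  obtain n where "z = a + b * n" using assms(2) by blast
  then have "gcd b z = gcd b a" using gcd_add_mult[of b n a] by (simp add: add.commute mult.commute)
  then show ?thesis using assms(1) by (metis coprime_iff_gcd_eq_1 gcd.commute)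
qed

lemma kirch_open_progression:
  assumes "a \<ge> 1" "b \<ge> 1" "coprime a b" "squarefree b"
  shows "kirch_open (progression a b)"
  unfolding kirch_open_def
proof (intro conjI ballI)
  show "progression a b \<subseteq> Npos" using assms(1) by (auto simp: Npos_def)
next
  fix z assume z: "z \<in> progression a b"
  have "z \<ge> 1" using z assms(1) by auto
  then have "kirch_basic (progression z b)"
    unfolding kirch_basic_def using assms(2,4) coprime_progression[OF assms(3) z]
    by (intro exI[of _ z] exI[of _ b]) simp
  moreover have "z \<in> progression z b" by force
  ultimately show "\<exists>S. kirch_basic S \<and> z \<in> S \<and> S \<subseteq> progression a b"
    using progression_shift[OF z] by blast
qed

lemma kirch_open_contains_progression:
  assumes "kirch_open U" "z \<in> U"
  obtains b where "b \<ge> 1" "coprime z b" "squarefree b" "progression z b \<subseteq> U"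
proof -
  obtain S where S: "kirch_basic S" "z \<in> S" "S \<subseteq> U"
    using assms unfolding kirch_open_def by blast
  then obtain a b where ab: "b \<ge> 1" "coprime a b" "squarefree b" "S = progression a b"
    unfolding kirch_basic_def by blast
  have "coprime z b" using coprime_progression ab(2) S(2) ab(4) by simp
  moreover have "progression z b \<subseteq> U" using progression_shift[of z a b] S(2,3) ab(4) by blast
  ultimately show ?thesis using that ab(1,3) by simp
qed

lemma kirch_open_progression_prod_primes:
  assumes "a \<ge> 1" "\<forall>p\<in>P. prime p \<and> \<not> p dvd a"
  shows "kirch_open (progression a (\<Prod>P))"
proof (rule kirch_open_progression[OF assms(1)])
  show "\<Prod>P \<ge> 1" using assms(2) by (simp add: Suc_le_eq prime_gt_0_nat prod_pos)
  show "coprime a (\<Prod>P)"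
    using assms(2) by (simp add: prod_coprime_right prime_imp_coprime coprime_commute)
  show "squarefree (\<Prod>P)"
    using squarefree_prod_coprime[of P "\<lambda>p. p"] assms(2)
    by (simp add: primes_coprime squarefree_prime)
qed

lemma kirch_closure_mono: "A \<subseteq> A' \<Longrightarrow> kirch_closure A \<subseteq> kirch_closure A'"
  unfolding kirch_closure_def by blast

lemma kirch_closure_progression_dvd:
  assumes "y \<in> kirch_closure (progression a b)" "prime p" "p dvd b"
  shows "p dvd y \<or> [y = a] (mod p)"
proof (rule ccontr)
  assume H: "\<not> (p dvd y \<or> [y = a] (mod p))"
  have "y \<ge> 1" using assms(1) by (auto simp: kirch_closure_def Npos_def)
  moreover have "coprime y p"
    using H assms(2) by (simp add: prime_imp_coprime coprime_commute)
  ultimately have "kirch_open (progression y p)"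
    using assms(2)
    by (intro kirch_open_progression) (auto simp: squarefree_prime Suc_le_eq prime_gt_0_nat)
  moreover have "y \<in> progression y p" by force
  ultimately obtain n m where e: "y + p * n = a + b * m"
    using assms(1) unfolding kirch_closure_def by blast
  have "[y = y + p * n] (mod p)" by (simp add: cong_def)
  also have "[y + p * n = a] (mod p)"
    using e assms(3) by (auto simp: cong_def mult.assoc elim!: dvdE)
  finally show False using H by blast
qed

lemma squarefree_cong:
  fixes m x y :: nat
  assumes "squarefree m" "\<And>p. prime p \<Longrightarrow> p dvd m \<Longrightarrow> [x = y] (mod p)"
  shows "[x = y] (mod m)"
proof -
  define d where "d = nat \<bar>int x - int y\<bar>"
  have dvd_d: "p dvd d" if "prime p" "p dvd m" for p
    using assms(2)[OF that] by (simp add: cong_altdef_nat' d_def)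
  have "m dvd d"
  proof (cases "d = 0")
    case False
    have "m \<noteq> 0" using assms(1) by (metis not_squarefree_0)
    then show ?thesis
    proof (rule multiplicity_le_imp_dvd)
      fix p :: nat assume p: "prime p"
      have "multiplicity p m \<le> 1"
        using assms(1) \<open>m \<noteq> 0\<close> p by (simp add: squarefree_factorial_semiring'')
      moreover have "multiplicity p m \<ge> 1 \<Longrightarrow> multiplicity p d \<ge> 1"
        using dvd_d[OF p] p \<open>m \<noteq> 0\<close> False by (simp add: prime_multiplicity_gt_zero_iff Suc_le_eq)
      ultimately show "multiplicity p m \<le> multiplicity p d" by linarith
    qed
  qed simp
  then show ?thesis by (simp add: cong_altdef_nat' d_def)
qed

lemma progressions_meet:
  fixes y a b c :: nat
  assumes "b > 0" "c > 0" "[y = a] (mod gcd b c)"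
  obtains n m where "y + c * n = a + b * m"
proof -
  have "gcd (int b) (int c) dvd int y - int a"
    using assms(3) by (simp add: cong_iff_dvd_diff flip: cong_int_iff)
  then obtain d where d: "int y - int a = gcd (int b) (int c) * d" by (auto elim: dvdE)
  obtain u v where uv: "u * int b + v * int c = gcd (int b) (int c)" using bezout_int by blast
  \<comment> \<open>shift the Bezout coefficients by a multiple of b resp. c to make them nonnegative\<close>
  define L where "L = \<bar>d * v\<bar> + \<bar>d * u\<bar>"
  have "L \<ge> 0" by (simp add: L_def)
  then have "L * int b \<ge> L" "L * int c \<ge> L"
    using assms(1,2) by (simp_all add: mult_le_cancel_left1)
  then have n0: "- d * v + L * int b \<ge> 0" and m0: "d * u + L * int c \<ge> 0"
    unfolding L_def by linarith+
  have "int y - int a = d * (u * int b + v * int c)" using d uv by simp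
  then have "int y + int c * (- d * v + L * int b) = int a + int b * (d * u + L * int c)"
    by (simp add: algebra_simps)
  then have "int (y + c * nat (- d * v + L * int b)) = int (a + b * nat (d * u + L * int c))"
    using n0 m0 by simp
  then have "y + c * nat (- d * v + L * int b) = a + b * nat (d * u + L * int c)"
    by (rule of_nat_eq_iff[THEN iffD1])
  then show ?thesis using that by blast
qed

lemma kirch_closure_progressionI:
  assumes "b \<ge> 1" "squarefree b" "y \<ge> 1"
    and "\<And>p. prime p \<Longrightarrow> p dvd b \<Longrightarrow> p dvd y \<or> [y = a] (mod p)"
  shows "y \<in> kirch_closure (progression a b)"
  unfolding kirch_closure_def
proof (intro CollectI conjI allI impI)
  show "y \<in> Npos" using assms(3) by (simp add: Npos_def)
  fix V assume "kirch_open V \<and> y \<in> V"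
  then obtain c where c: "c \<ge> 1" "coprime y c" "squarefree c" "progression y c \<subseteq> V"
    using kirch_open_contains_progression by blast
  have "[y = a] (mod gcd b c)"
  proof (rule squarefree_cong)
    show "squarefree (gcd b c)" using assms(2) squarefree_mono by (metis gcd_dvd1)
    fix p assume p: "prime p" "p dvd gcd b c"
    then have "\<not> p dvd y"
      using c(2) by (metis coprime_common_divisor gcd_dvd2 dvd_trans not_prime_unit)
    then show "[y = a] (mod p)" using assms(4) p by auto
  qed
  then obtain n m where e: "y + c * n = a + b * m"
    using progressions_meet assms(1) c(1) by (metis One_nat_def Suc_le_eq)
  have "y + c * n \<in> V" using c(4) by auto
  moreover have "y + c * n \<in> progression a b" using e by auto
  ultimately show "V \<inter> progression a b \<noteq> {}" by blast
qed

section \<open>Sieve filters\<close>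

definition sieve_set :: "(nat \<Rightarrow> nat \<Rightarrow> bool) \<Rightarrow> nat \<Rightarrow> nat set" where
  "sieve_set R N = {y \<in> Npos. \<forall>p. prime p \<longrightarrow> p \<le> N \<longrightarrow> R p y}"

definition sieve_filter :: "(nat \<Rightarrow> nat \<Rightarrow> bool) \<Rightarrow> nat set set" where
  "sieve_filter R = {B. B \<subseteq> Npos \<and> (\<exists>N. sieve_set R N \<subseteq> B)}"

definition residue_condition :: "(nat \<Rightarrow> nat \<Rightarrow> bool) \<Rightarrow> bool" where
  "residue_condition R \<longleftrightarrow>
     (\<forall>p y. p dvd y \<longrightarrow> R p y) \<and> (\<forall>p y y'. [y = y'] (mod p) \<longrightarrow> R p y = R p y')"

lemma sieve_set_antimono: "N \<le> N' \<Longrightarrow> sieve_set R N' \<subseteq> sieve_set R N"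
  unfolding sieve_set_def by auto

lemma sieve_set_subset_INT:
  assumes "finite I" "\<And>i. i \<in> I \<Longrightarrow> \<exists>N. sieve_set R N \<subseteq> S i"
  shows "\<exists>N. sieve_set R N \<subseteq> (\<Inter>i\<in>I. S i)"
proof -
  obtain N where N: "\<And>i. i \<in> I \<Longrightarrow> sieve_set R (N i) \<subseteq> S i" using assms(2) by metis
  have "sieve_set R (\<Sum>i\<in>I. N i) \<subseteq> S i" if "i \<in> I" for i
    using sieve_set_antimono[OF member_le_sum[OF that _ assms(1)]] N[OF that] by blast
  then show ?thesis by blast
qed

lemma sieve_set_contains_residue:
  assumes R: "residue_condition R" and q: "prime q" "R q r"
  obtains y where "y \<in> sieve_set R N" "[y = r] (mod q)"
proof -
  define P where "P = {p. prime p \<and> p \<le> N \<and> p \<noteq> q}"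
  define m where "m = \<Prod>P"
  have "finite P" unfolding P_def by (rule finite_subset[of _ "{..N}"]) auto
  have "m > 0" unfolding m_def P_def by (simp add: prime_gt_0_nat prod_pos)
  have "coprime q m"
    unfolding m_def P_def using q(1) by (auto intro!: prod_coprime_right simp: primes_coprime)
  then obtain x where x: "[x = r] (mod q)" "[x = 0] (mod m)"
    using binary_chinese_remainder_nat by blast
  \<comment> \<open>adding q * m keeps both congruences and makes the solution positive\<close>
  define y where "y = x + q * m"
  have "y \<ge> 1" unfolding y_def using \<open>m > 0\<close> q(1) by (simp add: Suc_le_eq prime_gt_0_nat)
  have yr: "[y = r] (mod q)" using x(1) unfolding y_def by (simp add: cong_def)
  have "m dvd y" using x(2) unfolding y_def by (simp add: cong_0_iff)
  have "R p y" if p: "prime p" "p \<le> N" for p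
  proof (cases "p = q")
    case True
    then show ?thesis using R q yr p(1) unfolding residue_condition_def by blast
  next
    case False
    then have "p \<in> P" unfolding P_def using p by blast
    then have "p dvd m" unfolding m_def using dvd_prodI[OF \<open>finite P\<close>, of p "\<lambda>i. i"] by simp
    then show ?thesis using R p(1) \<open>m dvd y\<close> unfolding residue_condition_def by (meson dvd_trans)
  qed
  then have "y \<in> sieve_set R N" using \<open>y \<ge> 1\<close> unfolding sieve_set_def Npos_def by blast
  then show ?thesis using that yr by blast
qed

lemma sieve_filter_subset_iff:
  assumes R: "residue_condition R" and R': "residue_condition R'"
  shows "sieve_filter R \<subseteq> sieve_filter R' \<longleftrightarrow> (\<forall>q y. prime q \<longrightarrow> R' q y \<longrightarrow> R q y)"
proof
  assume sub: "sieve_filter R \<subseteq> sieve_filter R'"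
  show "\<forall>q y. prime q \<longrightarrow> R' q y \<longrightarrow> R q y"
  proof (intro allI impI)
    fix q r assume q: "prime q" "R' q r"
    have "sieve_set R q \<in> sieve_filter R" unfolding sieve_filter_def sieve_set_def by blast
    with sub obtain N where N: "sieve_set R' N \<subseteq> sieve_set R q" unfolding sieve_filter_def by blast
    obtain y where y: "y \<in> sieve_set R' N" "[y = r] (mod q)"
      using sieve_set_contains_residue[OF R' q] by blast
    have "R q y" using N y(1) q(1) unfolding sieve_set_def by blast
    then show "R q r" using R q(1) y(2) unfolding residue_condition_def by blast
  qed
next
  assume "\<forall>q y. prime q \<longrightarrow> R' q y \<longrightarrow> R q y"
  then have "sieve_set R' N \<subseteq> sieve_set R N" for N unfolding sieve_set_def by blast
  then show "sieve_filter R \<subseteq> sieve_filter R'" unfolding sieve_filter_def by blast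
qed

lemma sieve_set_subset_kirch_closure:
  assumes "kirch_open U" "z \<in> U"
    and "\<And>p y. prime p \<Longrightarrow> R p y \<Longrightarrow> \<not> p dvd z \<Longrightarrow> p dvd y \<or> [y = z] (mod p)"
  shows "\<exists>N. sieve_set R N \<subseteq> kirch_closure U"
proof -
  obtain b where b: "b \<ge> 1" "coprime z b" "squarefree b" "progression z b \<subseteq> U"
    using kirch_open_contains_progression[OF assms(1,2)] by blast
  have "y \<in> kirch_closure (progression z b)" if y: "y \<in> sieve_set R b" for y
  proof (rule kirch_closure_progressionI[OF b(1,3)])
    show "y \<ge> 1" using y by (simp add: sieve_set_def Npos_def)
    fix p assume p: "prime p" "p dvd b"
    then have "R p y" using y b(1) by (simp add: sieve_set_def dvd_imp_le)
    moreover have "\<not> p dvd z" using p b(2) by (metis coprime_common_divisor not_prime_unit)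
    ultimately show "p dvd y \<or> [y = z] (mod p)" using assms(3) p(1) by blast
  qed
  then show ?thesis using kirch_closure_mono[OF b(4)] by blast
qed

section \<open>The filters F_E and F_\<infinity> as sieve filters\<close>

lemma even_prime_nat_eq_2: "prime (p :: nat) \<Longrightarrow> even p \<Longrightarrow> p = 2"
  using prime_odd_nat[of p] prime_ge_2_nat[of p] by fastforce

text \<open>
  The condition imposed at the prime p on the points of Npos \<inter> (\<Inter>x\<in>E. kirch_closure (U x))
  once the neighbourhoods U x are small enough.
\<close>
definition residue_compatible :: "nat set \<Rightarrow> nat \<Rightarrow> nat \<Rightarrow> bool" where
  "residue_compatible E p y \<longleftrightarrow> p dvd y \<or> (\<forall>x\<in>E. \<not> p dvd x \<longrightarrow> [y = x] (mod p))"

definition residue_compatible_inf :: "nat \<Rightarrow> nat \<Rightarrow> bool" where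
  "residue_compatible_inf p y \<longleftrightarrow> (odd p \<longrightarrow> p dvd y)"

lemma residue_compatible_cong:
  assumes "[y = y'] (mod p)"
  shows "residue_compatible E p y \<longleftrightarrow> residue_compatible E p y'"
proof -
  have "[y = x] (mod p) \<longleftrightarrow> [y' = x] (mod p)" for x
    using assms by (meson cong_sym cong_trans)
  then show ?thesis using cong_dvd_iff[OF assms] by (simp add: residue_compatible_def)
qed

lemma residue_compatible_two: "residue_compatible E 2 y"
  unfolding residue_compatible_def cong_def by (auto simp: odd_iff_mod_2_eq_one)

lemma residue_compatible_unique:
  "x \<in> E \<Longrightarrow> \<not> p dvd x \<Longrightarrow> residue_compatible E p y \<Longrightarrow> \<not> p dvd y \<Longrightarrow> [y = x] (mod p)"
  by (simp add: residue_compatible_def)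

lemma residue_condition_compatible: "residue_condition (residue_compatible E)"
  using residue_compatible_cong by (auto simp: residue_condition_def residue_compatible_def)

lemma residue_condition_compatible_inf: "residue_condition residue_compatible_inf"
  by (auto simp: residue_condition_def residue_compatible_inf_def cong_dvd_iff)

lemma filt_subset_sieve_filter:
  assumes "finite E"
  shows "filt E \<subseteq> sieve_filter (residue_compatible E)"
proof
  fix B assume "B \<in> filt E"
  then obtain U where U: "\<forall>x\<in>E. U x \<in> kirch_nbhds x"
    and B: "Npos \<inter> (\<Inter>x\<in>E. kirch_closure (U x)) \<subseteq> B" "B \<subseteq> Npos"
    unfolding filt_def by blast
  have "\<exists>N. sieve_set (residue_compatible E) N \<subseteq> kirch_closure (U x)" if "x \<in> E" for x
    using U that
    by (intro sieve_set_subset_kirch_closure) (auto simp: kirch_nbhds_def residue_compatible_def)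
  then obtain N where "sieve_set (residue_compatible E) N \<subseteq> (\<Inter>x\<in>E. kirch_closure (U x))"
    using sieve_set_subset_INT[OF assms] by meson
  then have "sieve_set (residue_compatible E) N \<subseteq> B" using B by (auto simp: sieve_set_def)
  then show "B \<in> sieve_filter (residue_compatible E)" using B(2) by (auto simp: sieve_filter_def)
qed

lemma sieve_filter_subset_filt:
  assumes "E \<subseteq> Npos"
  shows "sieve_filter (residue_compatible E) \<subseteq> filt E"
proof
  fix B assume "B \<in> sieve_filter (residue_compatible E)"
  then obtain N where B: "B \<subseteq> Npos" "sieve_set (residue_compatible E) N \<subseteq> B"
    unfolding sieve_filter_def by blast
  define P where "P x = {p. prime p \<and> p \<le> N \<and> \<not> p dvd x}" for x
  define U where "U x = progression x (\<Prod>(P x))" for x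
  have "finite (P x)" for x unfolding P_def by (rule finite_subset[of _ "{..N}"]) auto
  have "U x \<in> kirch_nbhds x" if "x \<in> E" for x
  proof -
    have "kirch_open (U x)"
      unfolding U_def P_def using that assms
      by (intro kirch_open_progression_prod_primes) (auto simp: Npos_def)
    moreover have "x \<in> U x" unfolding U_def by force
    ultimately show ?thesis unfolding kirch_nbhds_def by blast
  qed
  moreover have "Npos \<inter> (\<Inter>x\<in>E. kirch_closure (U x)) \<subseteq> sieve_set (residue_compatible E) N"
  proof
    fix y assume y: "y \<in> Npos \<inter> (\<Inter>x\<in>E. kirch_closure (U x))"
    have "residue_compatible E p y" if p: "prime p" "p \<le> N" for p
    proof -
      have "p dvd y \<or> [y = x] (mod p)" if x: "x \<in> E" "\<not> p dvd x" for x
      proof (rule kirch_closure_progression_dvd[OF _ p(1)])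
        show "y \<in> kirch_closure (progression x (\<Prod>(P x)))" using y x(1) unfolding U_def by blast
        have "p \<in> P x" unfolding P_def using p x(2) by blast
        then show "p dvd \<Prod>(P x)" using dvd_prodI[OF \<open>finite (P x)\<close>, of p "\<lambda>i. i"] by simp
      qed
      then show ?thesis unfolding residue_compatible_def by blast
    qed
    then show "y \<in> sieve_set (residue_compatible E) N" using y unfolding sieve_set_def by blast
  qed
  ultimately show "B \<in> filt E" unfolding filt_def using B by blast
qed

lemma filt_eq_sieve_filter:
  "finite E \<Longrightarrow> E \<subseteq> Npos \<Longrightarrow> filt E = sieve_filter (residue_compatible E)"
  using filt_subset_sieve_filter sieve_filter_subset_filt by blast

lemma filt_inf_subset_sieve_filter: "filt_inf \<subseteq> sieve_filter residue_compatible_inf"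
proof
  fix B assume "B \<in> filt_inf"
  then obtain Us where Us: "\<forall>U\<in>set Us. kirch_open U \<and> U \<noteq> {}"
    and B: "(\<Inter>U\<in>set Us. kirch_closure U) \<subseteq> B" "B \<subseteq> Npos"
    unfolding filt_inf_def by blast
  have "\<exists>N. sieve_set residue_compatible_inf N \<subseteq> kirch_closure U" if U: "U \<in> set Us" for U
  proof -
    obtain z where "z \<in> U" using Us U by blast
    moreover have "p dvd y \<or> [y = z] (mod p)"
      if "prime p" "residue_compatible_inf p y" "\<not> p dvd z" for p y
    proof (cases "odd p")
      case False
      then have "p = 2" using \<open>prime p\<close> by (simp add: even_prime_nat_eq_2)
      then show ?thesis using \<open>\<not> p dvd z\<close> by (auto simp: cong_def odd_iff_mod_2_eq_one)
    qed (use that in \<open>simp add: residue_compatible_inf_def\<close>)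
    ultimately show ?thesis using Us U by (intro sieve_set_subset_kirch_closure) auto
  qed
  then obtain N where "sieve_set residue_compatible_inf N \<subseteq> (\<Inter>U\<in>set Us. kirch_closure U)"
    using sieve_set_subset_INT[of "set Us"] by (meson finite_set)
  then show "B \<in> sieve_filter residue_compatible_inf"
    using B unfolding sieve_filter_def by blast
qed

lemma dvd_if_in_kirch_closure_progressions_1_2:
  assumes "y \<in> kirch_closure (progression 1 b)" "y \<in> kirch_closure (progression 2 b)"
    and "prime p" "odd p" "p dvd b"
  shows "p dvd y"
proof (rule ccontr)
  assume "\<not> p dvd y"
  then have "[y = 1] (mod p)" "[y = 2] (mod p)"
    using assms kirch_closure_progression_dvd by blast+
  then have "[1 = 2] (mod p)" by (metis cong_sym cong_trans)
  moreover have "p > 2" using assms(3,4) prime_ge_2_nat[of p] by (cases "p = 2") auto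
  ultimately show False by (simp add: cong_def)
qed

lemma sieve_filter_subset_filt_inf: "sieve_filter residue_compatible_inf \<subseteq> filt_inf"
proof
  fix B assume "B \<in> sieve_filter residue_compatible_inf"
  then obtain N where B: "B \<subseteq> Npos" "sieve_set residue_compatible_inf N \<subseteq> B"
    unfolding sieve_filter_def by blast
  define P where "P = {p. prime p \<and> odd p \<and> p \<le> N}"
  have "finite P" unfolding P_def by (rule finite_subset[of _ "{..N}"]) auto
  define Us where "Us = [progression 1 (\<Prod>P), progression 2 (\<Prod>P)]"
  have opens: "kirch_open (progression a (\<Prod>P))" if "a \<in> {1, 2}" for a :: nat
  proof (rule kirch_open_progression_prod_primes)
    show "\<forall>p\<in>P. prime p \<and> \<not> p dvd a"
      using that unfolding P_def by (auto dest: primes_dvd_imp_eq[OF _ two_is_prime_nat])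
  qed (use that in auto)
  have "a \<in> progression a (\<Prod>P)" for a by force
  moreover have "U = progression 1 (\<Prod>P) \<or> U = progression 2 (\<Prod>P)" if "U \<in> set Us" for U
    using that unfolding Us_def by simp
  ultimately have "kirch_open U \<and> U \<noteq> {}" if "U \<in> set Us" for U
    using that opens[of 1] opens[of 2] by blast
  moreover have "(\<Inter>U\<in>set Us. kirch_closure U) \<subseteq> sieve_set residue_compatible_inf N"
  proof
    fix y assume y: "y \<in> (\<Inter>U\<in>set Us. kirch_closure U)"
    have "progression a (\<Prod>P) \<in> set Us" if "a \<in> {1, 2}" for a
      using that unfolding Us_def by auto
    then have cl: "y \<in> kirch_closure (progression 1 (\<Prod>P))"
        "y \<in> kirch_closure (progression 2 (\<Prod>P))"
      using y by blast+
    have "p dvd y" if p: "prime p" "odd p" "p \<le> N" for p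
    proof (rule dvd_if_in_kirch_closure_progressions_1_2[OF cl p(1,2)])
      show "p dvd \<Prod>P" using p dvd_prodI[OF \<open>finite P\<close>, of p "\<lambda>i. i"] by (simp add: P_def)
    qed
    moreover have "y \<in> Npos" using cl(1) by (simp add: kirch_closure_def)
    ultimately show "y \<in> sieve_set residue_compatible_inf N"
      unfolding sieve_set_def residue_compatible_inf_def by blast
  qed
  moreover have "Us \<noteq> []" unfolding Us_def by simp
  ultimately show "B \<in> filt_inf" unfolding filt_inf_def using B by blast
qed

lemma filt_inf_eq_sieve_filter: "filt_inf = sieve_filter residue_compatible_inf"
  using filt_inf_subset_sieve_filter sieve_filter_subset_filt_inf by blast

lemma filt_subset_filt_iff:
  assumes "finite E" "E \<subseteq> Npos" "finite E'" "E' \<subseteq> Npos"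
  shows "filt E \<subseteq> filt E' \<longleftrightarrow>
    (\<forall>q y. prime q \<longrightarrow> residue_compatible E' q y \<longrightarrow> residue_compatible E q y)"
  using sieve_filter_subset_iff[OF residue_condition_compatible residue_condition_compatible]
  by (simp add: filt_eq_sieve_filter assms)

section \<open>The sets A_E\<close>

lemma A_set_iff: "q \<in> A_set E \<longleftrightarrow> prime q \<and> (\<exists>y. residue_compatible E q y \<and> \<not> q dvd y)"
proof
  assume "q \<in> A_set E"
  then obtain k where q: "prime q" and k: "k \<ge> 1" "\<forall>z\<in>E. q dvd z \<or> [z = k] (mod q)"
    unfolding A_set_def by (auto simp: cong_int_iff)
  show "prime q \<and> (\<exists>y. residue_compatible E q y \<and> \<not> q dvd y)"
  proof (cases "q dvd k")
    case True
    then have "\<forall>z\<in>E. q dvd z" using k(2) cong_dvd_iff by blast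
    then show ?thesis using q by (intro conjI exI[of _ 1]) (auto simp: residue_compatible_def)
  next
    case False
    have "residue_compatible E q k" using k(2) by (auto simp: residue_compatible_def cong_sym)
    then show ?thesis using q False by blast
  qed
next
  assume "prime q \<and> (\<exists>y. residue_compatible E q y \<and> \<not> q dvd y)"
  then obtain y where q: "prime q" and y: "residue_compatible E q y" "\<not> q dvd y" by blast
  have "y \<ge> 1" using y(2) by (cases y) auto
  moreover have "\<forall>z\<in>E. q dvd z \<or> [z = y] (mod q)"
    using y unfolding residue_compatible_def by (meson cong_sym)
  ultimately show "q \<in> A_set E" unfolding A_set_def using q by (auto simp: cong_int_iff)
qed

lemma two_in_A_set: "2 \<in> A_set E"
  using residue_compatible_two[of E 1] by (auto simp: A_set_iff)

lemma not_dvd_if_not_in_A_set: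
  "prime q \<Longrightarrow> q \<notin> A_set E \<Longrightarrow> residue_compatible E q y \<Longrightarrow> q dvd y"
  by (auto simp: A_set_iff)

lemma A_set_antimono:
  assumes "\<forall>q y. prime q \<longrightarrow> residue_compatible E' q y \<longrightarrow> residue_compatible E q y"
  shows "A_set E' \<subseteq> A_set E"
  using assms by (simp add: subset_iff A_set_iff) blast

lemma not_in_A_set_if_incongruent:
  assumes "x \<in> E" "x' \<in> E" "\<not> q dvd x" "\<not> q dvd x'" "\<not> [x = x'] (mod q)"
  shows "q \<notin> A_set E"
proof
  assume "q \<in> A_set E"
  then obtain y where "residue_compatible E q y" "\<not> q dvd y" by (auto simp: A_set_iff)
  then have "[y = x] (mod q)" "[y = x'] (mod q)" using assms residue_compatible_unique by blast+
  then show False using assms(5) by (meson cong_sym cong_trans)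
qed

lemma residue_compatible_eq_inf_iff:
  "(\<forall>q y. prime q \<longrightarrow> residue_compatible E q y = residue_compatible_inf q y) \<longleftrightarrow>
    A_set E \<subseteq> {2}"
proof
  assume H: "\<forall>q y. prime q \<longrightarrow> residue_compatible E q y = residue_compatible_inf q y"
  show "A_set E \<subseteq> {2}"
  proof
    fix q assume "q \<in> A_set E"
    then obtain y where "prime q" "residue_compatible E q y" "\<not> q dvd y" by (auto simp: A_set_iff)
    then show "q \<in> {2}" using H by (auto simp: residue_compatible_inf_def even_prime_nat_eq_2)
  qed
next
  assume A: "A_set E \<subseteq> {2}"
  show "\<forall>q y. prime q \<longrightarrow> residue_compatible E q y = residue_compatible_inf q y"
  proof (intro allI impI)
    fix q y :: nat assume q: "prime q"
    show "residue_compatible E q y = residue_compatible_inf q y"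
    proof (cases "q = 2")
      case True
      then show ?thesis by (simp add: residue_compatible_two residue_compatible_inf_def)
    next
      case False
      then have "q \<notin> A_set E" "odd q" using A q even_prime_nat_eq_2 by auto
      then show ?thesis using q not_dvd_if_not_in_A_set
        by (auto simp: residue_compatible_inf_def residue_compatible_def)
    qed
  qed
qed

lemma filt_eq_filt_inf_iff:
  assumes "finite E" "E \<subseteq> Npos"
  shows "filt E = filt_inf \<longleftrightarrow> A_set E \<subseteq> {2}"
proof -
  have "filt E = filt_inf \<longleftrightarrow>
      sieve_filter (residue_compatible E) \<subseteq> sieve_filter residue_compatible_inf \<and>
      sieve_filter residue_compatible_inf \<subseteq> sieve_filter (residue_compatible E)"
    unfolding filt_eq_sieve_filter[OF assms] filt_inf_eq_sieve_filter by (rule set_eq_subset)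
  also have "\<dots> \<longleftrightarrow> (\<forall>q y. prime q \<longrightarrow> residue_compatible E q y = residue_compatible_inf q y)"
    unfolding
      sieve_filter_subset_iff[OF residue_condition_compatible residue_condition_compatible_inf]
      sieve_filter_subset_iff[OF residue_condition_compatible_inf residue_condition_compatible]
    by blast
  also have "\<dots> \<longleftrightarrow> A_set E \<subseteq> {2}"
    by (rule residue_compatible_eq_inf_iff)
  finally show ?thesis .
qed

lemma PiE_primes_iff:
  assumes "E \<subseteq> Npos" "prime p"
  shows "p \<in> PiE_primes E \<longleftrightarrow> (\<forall>x\<in>E. p dvd x)"
  using assms by (auto simp: PiE_primes_def Npos_def in_prime_factors_iff)

lemma not_in_PiE_primes_if_residue:
  assumes "E \<subseteq> Npos" "prime p" "odd p" "x \<in> E'" "\<not> p dvd x"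
    and "\<forall>y. residue_compatible E p y \<longrightarrow> residue_compatible E' p y"
  shows "p \<notin> PiE_primes E"
proof
  assume "p \<in> PiE_primes E"
  then have "residue_compatible E p (2 * x)"
    using PiE_primes_iff[OF assms(1,2)] by (simp add: residue_compatible_def)
  then have "residue_compatible E' p (2 * x)" using assms(6) by blast
  moreover have "\<not> p dvd 2" using assms(2,3) primes_dvd_imp_eq[OF assms(2) two_is_prime_nat] by auto
  then have "\<not> p dvd 2 * x" using assms(2,5) by (simp add: prime_dvd_mult_iff)
  ultimately have "[x + x = x] (mod p)"
    using residue_compatible_unique assms(4,5) by (simp add: mult_2)
  then show False using assms(5) by (simp add: cong_add_lcancel_0_nat cong_0_iff)
qed

lemma residue_compatible_if_A_set_subset:
  assumes p: "prime p" and A: "A_set E \<subseteq> {2, p}"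
    and x: "x \<in> E" "\<not> p dvd x" "residue_compatible E' p x"
    and q: "prime q" "residue_compatible E q y"
  shows "residue_compatible E' q y"
proof -
  consider "q = 2" | "q = p" | "q \<notin> A_set E" using A by blast
  then show ?thesis
  proof cases
    case 1
    then show ?thesis by (simp add: residue_compatible_two)
  next
    case 2
    show ?thesis
    proof (cases "p dvd y")
      case True
      then show ?thesis using 2 by (simp add: residue_compatible_def)
    next
      case False
      then have "[y = x] (mod p)" using residue_compatible_unique x q(2) 2 by blast
      then show ?thesis using 2 x(3) residue_compatible_cong by blast
    qed
  next
    case 3
    then have "q dvd y" using q not_dvd_if_not_in_A_set by blast
    then show ?thesis by (simp add: residue_compatible_def)
  qed
qed

lemma A_set_three_term_progression:
  assumes p: "prime p"
  shows "A_set {r, r + p, r + 2 * p} \<subseteq> {2, p}"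
proof
  fix q assume qA: "q \<in> A_set {r, r + p, r + 2 * p}"
  show "q \<in> {2, p}"
  proof (rule ccontr)
    assume "q \<notin> {2, p}"
    moreover have q: "prime q" using qA by (simp add: A_set_iff)
    ultimately have "\<not> q dvd p" "\<not> q dvd 2"
      using primes_dvd_imp_eq[OF q p] primes_dvd_imp_eq[OF q two_is_prime_nat] by auto
    then have qp: "\<not> q dvd p" "\<not> q dvd 2 * p" using q by (auto simp: prime_dvd_mult_iff)
    have shift: "\<not> [a = a + d] (mod q)" if "\<not> q dvd d" for a d :: nat
    proof
      assume "[a = a + d] (mod q)"
      then have "[a + d = a] (mod q)" by (rule cong_sym)
      then show False using that by (simp add: cong_add_lcancel_0_nat cong_0_iff)
    qed
    have r2p: "r + 2 * p = (r + p) + p" by simp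
    consider "q dvd r" | "\<not> q dvd r" "\<not> q dvd r + p" | "\<not> q dvd r" "q dvd r + p" by blast
    then have "q \<notin> A_set {r, r + p, r + 2 * p}"
    proof cases
      case 1
      then have "\<not> q dvd r + p" "\<not> q dvd r + 2 * p" using qp by (simp_all add: dvd_add_right_iff)
      moreover have "\<not> [r + p = r + 2 * p] (mod q)" unfolding r2p using shift qp by blast
      ultimately show ?thesis by (intro not_in_A_set_if_incongruent) simp_all
    next
      case 2
      moreover have "\<not> [r = r + p] (mod q)" using shift qp by blast
      ultimately show ?thesis by (intro not_in_A_set_if_incongruent) simp_all
    next
      case 3
      then have "\<not> q dvd r + 2 * p" unfolding r2p using qp by (simp add: dvd_add_right_iff)
      moreover have "\<not> [r = r + 2 * p] (mod q)" using shift qp by blast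
      ultimately show ?thesis using 3 by (intro not_in_A_set_if_incongruent) simp_all
    qed
    then show False using qA by blast
  qed
qed

section \<open>Maximal filters\<close>

lemma A_set_eq_if_maximal:
  assumes E: "finite E" "E \<subseteq> Npos" and max: "maximal_in (filt_family - {filt_inf}) (filt E)"
  shows "\<exists>p. prime p \<and> odd p \<and> p \<notin> PiE_primes E \<and> A_set E = {2, p}"
proof -
  have "filt E \<noteq> filt_inf" using max by (simp add: maximal_in_def)
  then obtain p where "p \<in> A_set E" "p \<noteq> 2" using filt_eq_filt_inf_iff[OF E] by blast
  then obtain r where p: "prime p" "odd p" and r: "residue_compatible E p r" "\<not> p dvd r"
    by (auto simp: A_set_iff dest: even_prime_nat_eq_2)
  \<comment> \<open>a finite set whose residue at p is that of E and which has no residue at any other odd prime\<close>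
  define E' where "E' = {r, r + p, r + 2 * p}"
  have "r \<ge> 1" using r(2) by (cases r) auto
  then have E': "finite E'" "E' \<subseteq> Npos" by (auto simp: E'_def Npos_def)
  have AE': "A_set E' \<subseteq> {2, p}" unfolding E'_def using A_set_three_term_progression[OF p(1)] .
  have "r \<in> E'" by (simp add: E'_def)
  have "residue_compatible E' p r" by (auto simp: E'_def residue_compatible_def cong_def)
  then have "p \<in> A_set E'" using p r(2) by (auto simp: A_set_iff)
  have "filt E \<subseteq> filt E'"
    using residue_compatible_if_A_set_subset[OF p(1) AE' \<open>r \<in> E'\<close> r(2,1)]
    by (simp add: filt_subset_filt_iff[OF E E'])
  moreover have "filt E' \<in> filt_family - {filt_inf}"
    using \<open>p \<in> A_set E'\<close> p(2) E' filt_eq_filt_inf_iff[OF E'] by (auto simp: filt_family_def)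
  ultimately have eq: "filt E' = filt E" using max by (simp add: maximal_in_def)
  then have "A_set E \<subseteq> A_set E'"
    using filt_subset_filt_iff[OF E' E] by (intro A_set_antimono) simp
  then have "A_set E = {2, p}" using AE' \<open>p \<in> A_set E\<close> two_in_A_set by blast
  moreover have "p \<notin> PiE_primes E"
  proof (rule not_in_PiE_primes_if_residue[OF E(2) p \<open>r \<in> E'\<close> r(2)])
    show "\<forall>y. residue_compatible E p y \<longrightarrow> residue_compatible E' p y"
      using eq filt_subset_filt_iff[OF E' E] p(1) by simp
  qed
  ultimately show ?thesis using p by blast
qed

lemma maximal_if_A_set_eq:
  assumes E: "finite E" "E \<subseteq> Npos"
    and p: "prime p" "odd p" "p \<notin> PiE_primes E" and A: "A_set E = {2, p}"
  shows "maximal_in (filt_family - {filt_inf}) (filt E)"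
proof -
  obtain x where x: "x \<in> E" "\<not> p dvd x" using p PiE_primes_iff[OF E(2) p(1)] by blast
  have "p \<noteq> 2" using p(2) by auto
  have "filt E \<in> filt_family - {filt_inf}"
    using A \<open>p \<noteq> 2\<close> E filt_eq_filt_inf_iff[OF E] by (auto simp: filt_family_def)
  moreover have "G = filt E" if G: "G \<in> filt_family - {filt_inf}" and sub: "filt E \<subseteq> G" for G
  proof -
    obtain E' where E': "finite E'" "E' \<subseteq> Npos" and G: "G = filt E'" "filt E' \<noteq> filt_inf"
      using G by (auto simp: filt_family_def)
    have le: "\<forall>q y. prime q \<longrightarrow> residue_compatible E' q y \<longrightarrow> residue_compatible E q y"
      using sub G(1) filt_subset_filt_iff[OF E E'] by blast
    then have "A_set E' \<subseteq> {2, p}" using A A_set_antimono by blast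
    then have "p \<in> A_set E'" using G(2) filt_eq_filt_inf_iff[OF E'] by blast
    then obtain r where r: "residue_compatible E' p r" "\<not> p dvd r" by (auto simp: A_set_iff)
    then have "[r = x] (mod p)" using le p(1) residue_compatible_unique x by blast
    then have "residue_compatible E' p x" using r(1) residue_compatible_cong by blast
    then have "filt E' \<subseteq> filt E"
      using residue_compatible_if_A_set_subset[OF p(1) _ x] A filt_subset_filt_iff[OF E' E] by blast
    then show "G = filt E" using sub G(1) by blast
  qed
  ultimately show ?thesis by (auto simp: maximal_in_def)
qed

theorem lemma3p10:
  fixes E :: "nat set"
  assumes "finite E" and "E \<noteq> {}" and "E \<subseteq> Npos"
  shows "maximal_in (filt_family - {filt_inf}) (filt E) \<longleftrightarrow>
         (\<exists>p::nat. prime p \<and> odd p \<and> p \<notin> PiE_primes E \<and> A_set E = {2, p})"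
  using A_set_eq_if_maximal[OF assms(1,3)] maximal_if_A_set_eq[OF assms(1,3)] by blast

end
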